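(* Let $(M,\mathbf{p})$ be an oriented projective manifold of dimension $2m+1\geq3$ equipped with a parallel tractor complex structure $\mathbb{J}^A{}_B\in\Gamma(\mathcal{A})$. If its underlying vector field $k$ is a projective symmetry of $\mathbf{p}$, then $k$ is an affine symmetry of every $k$-adapted scale $\nabla\in\mathbf{p}$.
   Context: A projective structure $\mathbf{p}$ is a class of torsion-free connections with the same unparametrised geodesics. The projective tractor bundle $\mathcal{T}=(J^1\mathcal{E}(1))^*$ ($\mathcal{E}(w)$ projective density bundles) splits for $\nabla\in\mathbf{p}$ as $TM(-1)\oplus\mathcal{E}(-1)$, with normal tractor connection $\nabla^{\mathcal{T}}_a(\nu^b,\rho)=(\nabla_a\nu^b+\rho\delta^b{}_a,\nabla_a\rho-\mathsf{P}_{ab}\nu^b)$ where $\mathsf{P}$ is the projective Schouten tensor, and canonical tractor $X=(0,1)$. $\mathcal{A}$ denotes trace-free endomorphisms of $\mathcal{T}$; a parallel tractor complex structure is a $\nabla^{\mathcal{T}}$-parallel $\mathbb{J}\in\Gamma(\mathcal{A})$ with $\mathbb{J}^2=-\mathrm{id}$, and its underlying vector field $k$ is the $TM$-component of $\mathbb{J}X$. A scale is a connection in $\mathbf{p}$ preserving a nowhere vanishing density of nonzero weight; it is $k$-adapted if $\nabla_ck^c=0$. A vector field $\xi$ is a projective symmetry if its flow preserves $\mathbf{p}$ (the trace-free part of $\mathcal{L}_\xi\nabla$ vanishes), and an affine symmetry of $\nabla$ if $\mathcal{L}_\xi\nabla=0$. *)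

theory Defs
  imports "HOL-Analysis.Analysis"
begin

text \<open>Local (single chart) setting: the manifold is an open set U of real^'n,
 with coordinates x. A connection is given by its Christoffel symbols
 Chr a b c x = Gamma^a_{bc}(x), with nabla_b v^a = d_b v^a + Gamma^a_{bc} v^c.
 Tractor indices are of type 'n option: Some b is the TM(-1) slot, None the E(-1) slot.
 Density bundles are trivialised by the coordinate volume form.\<close>

definition pd :: "'n::finite \<Rightarrow> (real^'n \<Rightarrow> real) \<Rightarrow> real^'n \<Rightarrow> real" where
  "pd i f x = frechet_derivative f (at x) (axis i 1)"

fun Ck :: "nat \<Rightarrow> (real^'n::finite) set \<Rightarrow> (real^'n \<Rightarrow> real) \<Rightarrow> bool" where
  "Ck 0 U f = continuous_on U f"
| "Ck (Suc k) U f = (f differentiable_on U \<and> (\<forall>i. Ck k U (pd i f)))"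

definition smooth_fn :: "(real^'n::finite) set \<Rightarrow> (real^'n \<Rightarrow> real) \<Rightarrow> bool" where
  "smooth_fn U f = (\<forall>k. Ck k U f)"

type_synonym 'n christoffel = "'n \<Rightarrow> 'n \<Rightarrow> 'n \<Rightarrow> real^'n \<Rightarrow> real"

definition torsion_free_connection :: "(real^'n::finite) set \<Rightarrow> 'n christoffel \<Rightarrow> bool" where
  "torsion_free_connection U G =
     ((\<forall>a b c. smooth_fn U (G a b c)) \<and> (\<forall>a b c. \<forall>x\<in>U. G a b c x = G a c b x))"

text \<open>Curvature: (nabla_a nabla_b - nabla_b nabla_a) v^c = R_{ab}^c_d v^d.\<close>
definition riemann :: "'n::finite christoffel \<Rightarrow> 'n \<Rightarrow> 'n \<Rightarrow> 'n \<Rightarrow> 'n \<Rightarrow> real^'n \<Rightarrow> real" where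
  "riemann G a b c d x =
     pd a (G c b d) x - pd b (G c a d) x
     + (\<Sum>e\<in>UNIV. G c a e x * G e b d x) - (\<Sum>e\<in>UNIV. G c b e x * G e a d x)"

definition ricci :: "'n::finite christoffel \<Rightarrow> 'n \<Rightarrow> 'n \<Rightarrow> real^'n \<Rightarrow> real" where
  "ricci G b d x = (\<Sum>a\<in>UNIV. riemann G a b a d x)"

definition schouten :: "'n::finite christoffel \<Rightarrow> 'n \<Rightarrow> 'n \<Rightarrow> real^'n \<Rightarrow> real" where
  "schouten G a b x =
     (ricci G a b x + ricci G b a x) / (2 * (real CARD('n) - 1))
   + (ricci G a b x - ricci G b a x) / (2 * (real CARD('n) + 1))"

text \<open>Connection form of the normal tractor connection in the splitting of nabla:
 nabla^T_a (nu^b, rho) = (nabla_a nu^b + rho delta^b_a, nabla_a rho - P_{ab} nu^b),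
 where nu, rho have projective weight -1 (hence the trace term -Gamma^c_{ca}/(n+1)).\<close>
definition tractor_conn_form ::
  "'n::finite christoffel \<Rightarrow> 'n \<Rightarrow> 'n option \<Rightarrow> 'n option \<Rightarrow> real^'n \<Rightarrow> real" where
  "tractor_conn_form G a I K x =
     (let t = (\<Sum>c\<in>UNIV. G c c a x) / (real CARD('n) + 1) in
      (case (I, K) of
         (Some b, Some c) \<Rightarrow> G b a c x - (if b = c then t else 0)
       | (Some b, None) \<Rightarrow> (if b = a then 1 else 0)
       | (None, Some d) \<Rightarrow> - schouten G a d x
       | (None, None) \<Rightarrow> - t))"

definition tractor_deriv_endo ::
  "'n::finite christoffel \<Rightarrow> ('n option \<Rightarrow> 'n option \<Rightarrow> real^'n \<Rightarrow> real)
     \<Rightarrow> 'n \<Rightarrow> 'n option \<Rightarrow> 'n option \<Rightarrow> real^'n \<Rightarrow> real" where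
  "tractor_deriv_endo G J a I K x =
     pd a (J I K) x + (\<Sum>L\<in>UNIV. tractor_conn_form G a I L x * J L K x)
                    - (\<Sum>L\<in>UNIV. J I L x * tractor_conn_form G a L K x)"

definition parallel_tractor_complex_structure ::
  "(real^'n::finite) set \<Rightarrow> 'n christoffel \<Rightarrow> ('n option \<Rightarrow> 'n option \<Rightarrow> real^'n \<Rightarrow> real) \<Rightarrow> bool" where
  "parallel_tractor_complex_structure U G J =
     ((\<forall>I K. smooth_fn U (J I K))
    \<and> (\<forall>x\<in>U. (\<Sum>I\<in>UNIV. J I I x) = 0)
    \<and> (\<forall>x\<in>U. \<forall>I K. (\<Sum>L\<in>UNIV. J I L x * J L K x) = (if I = K then -1 else 0))
    \<and> (\<forall>x\<in>U. \<forall>a I K. tractor_deriv_endo G J a I K x = 0))"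

definition canonical_tractor :: "'n option \<Rightarrow> real" where
  "canonical_tractor I = (if I = None then 1 else 0)"

definition underlying_vf ::
  "('n::finite option \<Rightarrow> 'n option \<Rightarrow> real^'n \<Rightarrow> real) \<Rightarrow> 'n \<Rightarrow> real^'n \<Rightarrow> real" where
  "underlying_vf J b x = (\<Sum>K\<in>UNIV. J (Some b) K x * canonical_tractor K)"

definition lie_conn ::
  "'n::finite christoffel \<Rightarrow> ('n \<Rightarrow> real^'n \<Rightarrow> real) \<Rightarrow> 'n \<Rightarrow> 'n \<Rightarrow> 'n \<Rightarrow> real^'n \<Rightarrow> real" where
  "lie_conn G xi a b c x =
     pd b (pd c (xi a)) x + (\<Sum>d\<in>UNIV. xi d x * pd d (G a b c) x)
   - (\<Sum>d\<in>UNIV. G d b c x * pd d (xi a) x)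
   + (\<Sum>d\<in>UNIV. G a d c x * pd b (xi d) x) + (\<Sum>d\<in>UNIV. G a b d x * pd c (xi d) x)"

definition tracefree_part ::
  "('n::finite \<Rightarrow> 'n \<Rightarrow> 'n \<Rightarrow> real^'n \<Rightarrow> real) \<Rightarrow> 'n \<Rightarrow> 'n \<Rightarrow> 'n \<Rightarrow> real^'n \<Rightarrow> real" where
  "tracefree_part L a b c x =
     L a b c x - ((if a = b then (\<Sum>d\<in>UNIV. L d d c x) else 0)
                 + (if a = c then (\<Sum>d\<in>UNIV. L d b d x) else 0)) / (real CARD('n) + 1)"

definition projective_symmetry ::
  "(real^'n::finite) set \<Rightarrow> 'n christoffel \<Rightarrow> ('n \<Rightarrow> real^'n \<Rightarrow> real) \<Rightarrow> bool" where
  "projective_symmetry U G xi =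
     ((\<forall>a. smooth_fn U (xi a)) \<and>
      (\<forall>x\<in>U. \<forall>a b c. tracefree_part (lie_conn G xi) a b c x = 0))"

definition affine_symmetry ::
  "(real^'n::finite) set \<Rightarrow> 'n christoffel \<Rightarrow> ('n \<Rightarrow> real^'n \<Rightarrow> real) \<Rightarrow> bool" where
  "affine_symmetry U G xi =
     ((\<forall>a. smooth_fn U (xi a)) \<and> (\<forall>x\<in>U. \<forall>a b c. lie_conn G xi a b c x = 0))"

text \<open>Scale: nabla preserves a nowhere vanishing density sigma of weight w \<noteq> 0;
 a weight w density f has nabla_a f = d_a f + (w/(n+1)) Gamma^b_{ab} f.\<close>
definition is_scale :: "(real^'n::finite) set \<Rightarrow> 'n christoffel \<Rightarrow> bool" where
  "is_scale U G =
     (\<exists>(\<sigma>::real^'n \<Rightarrow> real) (w::real). w \<noteq> 0 \<and> smooth_fn U \<sigma> \<and> (\<forall>x\<in>U. \<sigma> x \<noteq> 0) \<and>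
        (\<forall>x\<in>U. \<forall>a. pd a \<sigma> x + w / (real CARD('n) + 1) * (\<Sum>b\<in>UNIV. G b a b x) * \<sigma> x = 0))"

definition k_adapted :: "(real^'n::finite) set \<Rightarrow> 'n christoffel \<Rightarrow> ('n \<Rightarrow> real^'n \<Rightarrow> real) \<Rightarrow> bool" where
  "k_adapted U G k = (\<forall>x\<in>U. (\<Sum>c\<in>UNIV. pd c (k c) x + (\<Sum>e\<in>UNIV. G c c e x * k e x)) = 0)"

end

theory Submission
  imports Defs
begin

text \<open>In a scale preserving the density \<sigma>, the trace \<Gamma>^b_{ab} of the connection is a constant
  multiple of the gradient of log \<sigma>, hence closed. Using this, torsion-freeness and the
  symmetry of second partial derivatives, both traces of the Lie derivative L_k \<nabla> equal the
  gradient of the divergence \<nabla>_c k^c, which vanishes identically in a k-adapted scale. Thus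
  L_k \<nabla> coincides with its trace-free part, which vanishes because k is a projective symmetry.
  Only these properties of k enter.\<close>

lemma smooth_fn_pd: "smooth_fn U f \<Longrightarrow> smooth_fn U (pd i f)"
  unfolding smooth_fn_def by (metis Ck.simps(2))

lemma smooth_fn_differentiable_at:
  "smooth_fn U f \<Longrightarrow> open U \<Longrightarrow> x \<in> U \<Longrightarrow> f differentiable at x"
  unfolding smooth_fn_def by (metis Ck.simps(2) differentiable_on_eq_differentiable_at)

lemma smooth_fn_isCont:
  "smooth_fn U f \<Longrightarrow> open U \<Longrightarrow> x \<in> U \<Longrightarrow> isCont f x"
  unfolding smooth_fn_def by (metis Ck.simps(1) continuous_on_eq_continuous_at)

lemma pd_eq_has_derivative:
  "(f has_derivative f') (at x) \<Longrightarrow> pd i f x = f' (axis i 1)"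
  unfolding pd_def by (simp add: frechet_derivative_at[symmetric])

lemma pd_const [simp]: "pd i (\<lambda>y. c) x = 0"
  unfolding pd_def by simp

lemma pd_add:
  assumes "f differentiable at x" "g differentiable at x"
  shows "pd i (\<lambda>y. f y + g y) x = pd i f x + pd i g x"
  using pd_eq_has_derivative[OF has_derivative_add[OF assms[unfolded frechet_derivative_works]]]
  by (simp add: pd_def)

lemma pd_mult:
  assumes "f differentiable at x" "g differentiable at x"
  shows "pd i (\<lambda>y. f y * g y) x = pd i f x * g x + f x * pd i g x"
  using pd_eq_has_derivative[OF has_derivative_mult[OF assms[unfolded frechet_derivative_works]]]
  by (simp add: pd_def)

lemma pd_sum:
  assumes "\<And>e. e \<in> S \<Longrightarrow> F e differentiable at x"
  shows "pd i (\<lambda>y. \<Sum>e\<in>S. F e y) x = (\<Sum>e\<in>S. pd i (F e) x)"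
  using pd_eq_has_derivative[OF has_derivative_sum[of S F "\<lambda>e. frechet_derivative (F e) (at x)"]]
    assms by (simp add: pd_def frechet_derivative_works)

lemma pd_cong_open:
  assumes "open V" "x \<in> V" "f differentiable at x" "\<And>y. y \<in> V \<Longrightarrow> f y = g y"
  shows "pd i f x = pd i g x"
  unfolding pd_def using frechet_derivative_transform_within_open[OF assms(3,1,2,4)] by simp

lemma has_real_derivative_along_axis:
  fixes f :: "real^'n::finite \<Rightarrow> real"
  assumes "f differentiable at (y + s *\<^sub>R axis i 1)"
  shows "((\<lambda>s. f (y + s *\<^sub>R axis i 1)) has_real_derivative pd i f (y + s *\<^sub>R axis i 1)) (at s)"
proof -
  let ?f' = "frechet_derivative f (at (y + s *\<^sub>R axis i 1))"
  have f': "(f has_derivative ?f') (at (y + s *\<^sub>R axis i 1))"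
    using assms frechet_derivative_works by blast
  have "((\<lambda>s. y + s *\<^sub>R axis i 1) has_derivative (\<lambda>h. h *\<^sub>R axis i 1)) (at s)"
    by (auto intro!: derivative_eq_intros)
  from diff_chain_at[OF this f']
  have "((\<lambda>s. f (y + s *\<^sub>R axis i 1)) has_derivative (\<lambda>h. ?f' (h *\<^sub>R axis i 1))) (at s)"
    by (simp add: o_def)
  moreover have "linear ?f'"
    using f' has_derivative_linear by blast
  ultimately show ?thesis
    unfolding pd_def by (auto intro!: has_derivative_imp_has_field_derivative simp: linear_scale mult.commute)
qed

lemma mixed_difference_mean_value:
  fixes f :: "real^'n::finite \<Rightarrow> real" and i j :: 'n
  defines "u \<equiv> axis i (1::real)" and "v \<equiv> axis j (1::real)"
  assumes h: "0 < h"
    and box: "\<And>s t. 0 \<le> s \<Longrightarrow> s \<le> h \<Longrightarrow> 0 \<le> t \<Longrightarrow> t \<le> h \<Longrightarrow> x + s *\<^sub>R u + t *\<^sub>R v \<in> U"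
    and df: "\<And>p. p \<in> U \<Longrightarrow> f differentiable at p"
    and dfi: "\<And>p. p \<in> U \<Longrightarrow> pd i f differentiable at p"
  obtains s t where "0 < s" "s < h" "0 < t" "t < h"
    "f (x + h *\<^sub>R u + h *\<^sub>R v) - f (x + h *\<^sub>R u) - f (x + h *\<^sub>R v) + f x
       = h * h * pd j (pd i f) (x + s *\<^sub>R u + t *\<^sub>R v)"
proof -
  have "\<exists>s. 0 < s \<and> s < h \<and>
      (f (x + h *\<^sub>R v + h *\<^sub>R u) - f (x + h *\<^sub>R u)) - (f (x + h *\<^sub>R v + 0 *\<^sub>R u) - f (x + 0 *\<^sub>R u))
      = (h - 0) * (pd i f (x + h *\<^sub>R v + s *\<^sub>R u) - pd i f (x + s *\<^sub>R u))"
  proof (rule MVT2)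
    fix s assume "0 \<le> s" "s \<le> h"
    then have "x + h *\<^sub>R v + s *\<^sub>R u \<in> U" "x + s *\<^sub>R u \<in> U"
      using box[of s h] box[of s 0] h by (simp_all add: add_ac)
    then show "((\<lambda>s. f (x + h *\<^sub>R v + s *\<^sub>R u) - f (x + s *\<^sub>R u)) has_real_derivative
        pd i f (x + h *\<^sub>R v + s *\<^sub>R u) - pd i f (x + s *\<^sub>R u)) (at s)"
      unfolding u_def by (intro DERIV_diff has_real_derivative_along_axis df)
  qed (rule h)
  then obtain s where s: "0 < s" "s < h"
    and first: "f (x + h *\<^sub>R u + h *\<^sub>R v) - f (x + h *\<^sub>R u) - f (x + h *\<^sub>R v) + f x
      = h * (pd i f (x + s *\<^sub>R u + h *\<^sub>R v) - pd i f (x + s *\<^sub>R u + 0 *\<^sub>R v))"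
    by (auto simp: add_ac)
  have "\<exists>t. 0 < t \<and> t < h \<and>
      pd i f (x + s *\<^sub>R u + h *\<^sub>R v) - pd i f (x + s *\<^sub>R u + 0 *\<^sub>R v)
      = (h - 0) * pd j (pd i f) (x + s *\<^sub>R u + t *\<^sub>R v)"
  proof (rule MVT2)
    fix t assume "0 \<le> t" "t \<le> h"
    then show "((\<lambda>t. pd i f (x + s *\<^sub>R u + t *\<^sub>R v)) has_real_derivative
        pd j (pd i f) (x + s *\<^sub>R u + t *\<^sub>R v)) (at t)"
      unfolding v_def using s by (intro has_real_derivative_along_axis dfi box[unfolded v_def]) auto
  qed (rule h)
  with first that s show thesis by auto
qed

lemma mixed_partials_close:
  fixes f :: "real^'n::finite \<Rightarrow> real"
  assumes r: "0 < r" "ball x r \<subseteq> U"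
    and df: "\<And>p. p \<in> U \<Longrightarrow> f differentiable at p"
    and dfi: "\<And>p. p \<in> U \<Longrightarrow> pd i f differentiable at p"
    and dfj: "\<And>p. p \<in> U \<Longrightarrow> pd j f differentiable at p"
    and near: "\<And>p. dist p x < r \<Longrightarrow> \<bar>pd j (pd i f) p - pd j (pd i f) x\<bar> < e \<and>
                                     \<bar>pd i (pd j f) p - pd i (pd j f) x\<bar> < e"
  shows "\<bar>pd j (pd i f) x - pd i (pd j f) x\<bar> < 2 * e"
proof -
  let ?u = "axis i (1::real)" and ?v = "axis j (1::real)"
  define h where "h = r / 3"
  have h: "0 < h" using r by (simp add: h_def)
  have close: "dist (x + s *\<^sub>R ?u + t *\<^sub>R ?v) x < r" if "0 \<le> s" "s \<le> h" "0 \<le> t" "t \<le> h" for s t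
  proof -
    have "dist (x + s *\<^sub>R ?u + t *\<^sub>R ?v) x = norm (s *\<^sub>R ?u + t *\<^sub>R ?v)"
      by (simp add: dist_norm)
    also have "\<dots> \<le> norm (s *\<^sub>R ?u) + norm (t *\<^sub>R ?v)"
      by (rule norm_triangle_ineq)
    also have "\<dots> < r" using that r by (simp add: h_def)
    finally show ?thesis .
  qed
  have box: "x + s *\<^sub>R ?u + t *\<^sub>R ?v \<in> U" if "0 \<le> s" "s \<le> h" "0 \<le> t" "t \<le> h" for s t
    using close[OF that] r by (auto simp: dist_commute)
  obtain s t where st: "0 < s" "s < h" "0 < t" "t < h" and A:
    "f (x + h *\<^sub>R ?u + h *\<^sub>R ?v) - f (x + h *\<^sub>R ?u) - f (x + h *\<^sub>R ?v) + f x
       = h * h * pd j (pd i f) (x + s *\<^sub>R ?u + t *\<^sub>R ?v)"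
    by (rule mixed_difference_mean_value[OF h box df dfi]) auto
  obtain s' t' where st': "0 < s'" "s' < h" "0 < t'" "t' < h" and B:
    "f (x + h *\<^sub>R ?v + h *\<^sub>R ?u) - f (x + h *\<^sub>R ?v) - f (x + h *\<^sub>R ?u) + f x
       = h * h * pd i (pd j f) (x + s' *\<^sub>R ?v + t' *\<^sub>R ?u)"
  proof (rule mixed_difference_mean_value[where i = j and j = i, OF h _ df dfj])
    show "x + s *\<^sub>R ?v + t *\<^sub>R ?u \<in> U" if "0 \<le> s" "s \<le> h" "0 \<le> t" "t \<le> h" for s t
      using box[OF that(3,4,1,2)] by (simp add: add_ac)
  qed
  have "h * h * pd j (pd i f) (x + s *\<^sub>R ?u + t *\<^sub>R ?v)
      = h * h * pd i (pd j f) (x + t' *\<^sub>R ?u + s' *\<^sub>R ?v)"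
    using A B by (simp add: add_ac algebra_simps)
  then have "pd j (pd i f) (x + s *\<^sub>R ?u + t *\<^sub>R ?v) = pd i (pd j f) (x + t' *\<^sub>R ?u + s' *\<^sub>R ?v)"
    using h by simp
  moreover have "\<bar>pd j (pd i f) (x + s *\<^sub>R ?u + t *\<^sub>R ?v) - pd j (pd i f) x\<bar> < e"
    using near close st by simp
  moreover have "\<bar>pd i (pd j f) (x + t' *\<^sub>R ?u + s' *\<^sub>R ?v) - pd i (pd j f) x\<bar> < e"
    using near close st' by simp
  ultimately show ?thesis by linarith
qed

theorem pd_commute:
  fixes f :: "real^'n::finite \<Rightarrow> real"
  assumes U: "open U" "x \<in> U"
    and df: "\<And>p. p \<in> U \<Longrightarrow> f differentiable at p"
    and dfi: "\<And>p. p \<in> U \<Longrightarrow> pd i f differentiable at p"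
    and dfj: "\<And>p. p \<in> U \<Longrightarrow> pd j f differentiable at p"
    and cont: "isCont (pd j (pd i f)) x" "isCont (pd i (pd j f)) x"
  shows "pd j (pd i f) x = pd i (pd j f) x"
proof -
  have "\<bar>pd j (pd i f) x - pd i (pd j f) x\<bar> < 2 * e" if "0 < e" for e
  proof -
    obtain r1 where "r1 > 0" "\<And>p. dist p x < r1 \<Longrightarrow> dist (pd j (pd i f) p) (pd j (pd i f) x) < e"
      using cont(1) \<open>0 < e\<close> unfolding continuous_at_eps_delta by blast
    moreover obtain r2 where "r2 > 0" "\<And>p. dist p x < r2 \<Longrightarrow> dist (pd i (pd j f) p) (pd i (pd j f) x) < e"
      using cont(2) \<open>0 < e\<close> unfolding continuous_at_eps_delta by blast
    moreover obtain r3 where "r3 > 0" "ball x r3 \<subseteq> U"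
      using U open_contains_ball by blast
    ultimately show ?thesis
      by (intro mixed_partials_close[of "min r1 (min r2 r3)" x U f i j, OF _ _ df dfi dfj])
        (auto simp: dist_real_def)
  qed
  then have "\<bar>pd j (pd i f) x - pd i (pd j f) x\<bar> \<le> e" if "0 < e" for e
    using that by (metis field_sum_of_halves half_gt_zero less_imp_le mult_2)
  then show ?thesis by (metis dense_eq0_I eq_iff_diff_eq_0)
qed

lemma smooth_fn_pd_commute:
  assumes "smooth_fn U f" "open U" "x \<in> U"
  shows "pd j (pd i f) x = pd i (pd j f) x"
  using assms
  by (intro pd_commute smooth_fn_differentiable_at smooth_fn_isCont smooth_fn_pd) auto

lemma log_derivative_closed:
  assumes U: "open U" "x \<in> U"
    and \<sigma>: "smooth_fn U \<sigma>" "\<sigma> x \<noteq> 0" and \<phi>: "\<And>a. \<phi> a differentiable at x"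
    and log_deriv: "\<And>a y. y \<in> U \<Longrightarrow> pd a \<sigma> y = \<phi> a y * \<sigma> y"
  shows "pd e (\<phi> a) x = pd a (\<phi> e) x"
proof -
  have second: "pd e (pd a \<sigma>) x = (pd e (\<phi> a) x + \<phi> a x * \<phi> e x) * \<sigma> x" for a e
  proof -
    have "pd e (pd a \<sigma>) x = pd e (\<lambda>y. \<phi> a y * \<sigma> y) x"
      using U \<sigma> by (intro pd_cong_open[OF U] smooth_fn_differentiable_at smooth_fn_pd log_deriv)
    also have "\<dots> = pd e (\<phi> a) x * \<sigma> x + \<phi> a x * pd e \<sigma> x"
      by (intro pd_mult \<phi> smooth_fn_differentiable_at[OF \<sigma>(1) U])
    finally show ?thesis
      using log_deriv[OF U(2)] by (simp add: algebra_simps)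
  qed
  have "pd e (pd a \<sigma>) x = pd a (pd e \<sigma>) x"
    using smooth_fn_pd_commute[OF \<sigma>(1) U] .
  then show ?thesis
    unfolding second using \<sigma>(2) by (simp add: mult.commute)
qed

definition christoffel_trace :: "'n::finite christoffel \<Rightarrow> 'n \<Rightarrow> real^'n \<Rightarrow> real" where
  "christoffel_trace G a y = (\<Sum>b\<in>UNIV. G b a b y)"

lemma is_scale_christoffel_trace_closed:
  fixes G :: "'n::finite christoffel"
  assumes U: "open U" "x \<in> U" and "torsion_free_connection U G" and "is_scale U G"
  shows "pd e (christoffel_trace G a) x = pd a (christoffel_trace G e) x"
proof -
  obtain \<sigma> w where w: "w \<noteq> 0" and \<sigma>: "smooth_fn U \<sigma>" "\<And>y. y \<in> U \<Longrightarrow> \<sigma> y \<noteq> 0"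
    and parallel: "\<And>y a. y \<in> U \<Longrightarrow>
      pd a \<sigma> y + w / (real CARD('n) + 1) * (\<Sum>b\<in>UNIV. G b a b y) * \<sigma> y = 0"
    using \<open>is_scale U G\<close> unfolding is_scale_def by blast
  define c where "c = - w / (real CARD('n) + 1)"
  have c: "c \<noteq> 0" using w by (simp add: c_def add_pos_nonneg)
  have d_trace: "christoffel_trace G a differentiable at x" for a
    using \<open>torsion_free_connection U G\<close> U unfolding christoffel_trace_def torsion_free_connection_def
    by (auto intro!: differentiable_sum smooth_fn_differentiable_at)
  have "pd e (\<lambda>y. c * christoffel_trace G a y) x = pd a (\<lambda>y. c * christoffel_trace G e y) x"
  proof (rule log_derivative_closed[OF U \<sigma>(1) \<sigma>(2)[OF U(2)]])
    show "(\<lambda>y. c * christoffel_trace G a y) differentiable at x" for a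
      using d_trace by simp
    show "pd a \<sigma> y = c * christoffel_trace G a y * \<sigma> y" if "y \<in> U" for a y
      using parallel[OF that, of a] unfolding c_def christoffel_trace_def by (simp add: eq_neg_iff_add_eq_0)
  qed
  then show ?thesis
    using c by (simp add: pd_mult d_trace)
qed

definition divergence :: "'n::finite christoffel \<Rightarrow> ('n \<Rightarrow> real^'n \<Rightarrow> real) \<Rightarrow> real^'n \<Rightarrow> real" where
  "divergence G k y = (\<Sum>c\<in>UNIV. pd c (k c) y) + (\<Sum>e\<in>UNIV. christoffel_trace G e y * k e y)"

lemma k_adapted_divergence_eq_0:
  assumes "torsion_free_connection U G" "k_adapted U G k" "y \<in> U"
  shows "divergence G k y = 0"
proof -
  have "(\<Sum>e\<in>UNIV. christoffel_trace G e y * k e y) = (\<Sum>e\<in>UNIV. \<Sum>c\<in>UNIV. G c e c y * k e y)"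
    by (simp add: christoffel_trace_def sum_distrib_right)
  also have "\<dots> = (\<Sum>c\<in>UNIV. \<Sum>e\<in>UNIV. G c c e y * k e y)"
    using assms(1,3) by (subst sum.swap) (simp add: torsion_free_connection_def)
  finally show ?thesis
    using assms(2,3) by (simp add: k_adapted_def divergence_def sum.distrib)
qed

lemma lie_conn_trace_eq_pd_divergence:
  fixes G :: "'n::finite christoffel"
  assumes U: "open U" "x \<in> U"
    and G: "\<And>a b c. smooth_fn U (G a b c)" and k: "\<And>a. smooth_fn U (k a)"
    and closed: "\<And>a e. pd e (christoffel_trace G a) x = pd a (christoffel_trace G e) x"
  shows "(\<Sum>d\<in>UNIV. lie_conn G k d b d x) = pd b (divergence G k) x"
proof -
  have dG: "G a b c differentiable at x" for a b c
    using G U by (rule smooth_fn_differentiable_at)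
  have dk: "k a differentiable at x" for a
    using k U by (rule smooth_fn_differentiable_at)
  have dpk: "pd c (k a) differentiable at x" for a c
    using k U by (intro smooth_fn_differentiable_at smooth_fn_pd)
  have dtr: "christoffel_trace G a differentiable at x" for a
    unfolding christoffel_trace_def by (intro differentiable_sum ballI dG) simp
  have pd_trace: "pd e (christoffel_trace G a) x = (\<Sum>d\<in>UNIV. pd e (G d a d) x)" for a e
    unfolding christoffel_trace_def by (rule pd_sum[OF dG])
  have "pd b (divergence G k) x = (\<Sum>c\<in>UNIV. pd b (pd c (k c)) x)
      + (\<Sum>e\<in>UNIV. pd b (christoffel_trace G e) x * k e x + christoffel_trace G e x * pd b (k e) x)"
    unfolding divergence_def
    by (simp add: pd_add pd_sum pd_mult dk dpk dtr differentiable_sum)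
  moreover have "(\<Sum>d\<in>UNIV. lie_conn G k d b d x) = (\<Sum>d\<in>UNIV. pd b (pd d (k d)) x)
      + (\<Sum>e\<in>UNIV. k e x * pd e (christoffel_trace G b) x)
      + (\<Sum>e\<in>UNIV. christoffel_trace G e x * pd b (k e) x)"
  proof -
    have cancel: "(\<Sum>d\<in>UNIV. \<Sum>e\<in>UNIV. G e b d x * pd e (k d) x)
        = (\<Sum>d\<in>UNIV. \<Sum>e\<in>UNIV. G d b e x * pd d (k e) x)"
      by (rule sum.swap)
    have "(\<Sum>d\<in>UNIV. \<Sum>e\<in>UNIV. k e x * pd e (G d b d) x) = (\<Sum>e\<in>UNIV. k e x * pd e (christoffel_trace G b) x)"
      by (subst sum.swap) (simp add: pd_trace sum_distrib_left)
    moreover have "(\<Sum>d\<in>UNIV. \<Sum>e\<in>UNIV. G d e d x * pd b (k e) x) = (\<Sum>e\<in>UNIV. christoffel_trace G e x * pd b (k e) x)"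
      by (subst sum.swap) (simp add: christoffel_trace_def sum_distrib_right)
    ultimately show ?thesis
      using cancel unfolding lie_conn_def by (simp add: sum.distrib sum_subtractf)
  qed
  ultimately show ?thesis
    using closed by (simp add: sum.distrib mult.commute)
qed

lemma lie_conn_traces_eq:
  fixes G :: "'n::finite christoffel"
  assumes U: "open U" "x \<in> U"
    and G: "torsion_free_connection U G" and k: "\<And>a. smooth_fn U (k a)"
  shows "(\<Sum>a\<in>UNIV. lie_conn G k a a c x) = (\<Sum>d\<in>UNIV. lie_conn G k d c d x)"
proof -
  have sym: "G a b c y = G a c b y" if "y \<in> U" for a b c y
    using G that unfolding torsion_free_connection_def by blast
  have pd_sym: "pd d (G a b c) x = pd d (G a c b) x" for a b c d
    using G U sym unfolding torsion_free_connection_def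
    by (intro pd_cong_open[OF U] smooth_fn_differentiable_at) auto
  have t1: "(\<Sum>a\<in>UNIV. pd a (pd c (k a)) x) = (\<Sum>d\<in>UNIV. pd c (pd d (k d)) x)"
    using smooth_fn_pd_commute[OF k U] by simp
  have t2: "(\<Sum>a\<in>UNIV. \<Sum>d\<in>UNIV. k d x * pd d (G a a c) x)
      = (\<Sum>d\<in>UNIV. \<Sum>e\<in>UNIV. k e x * pd e (G d c d) x)"
    using pd_sym by simp
  have t3: "(\<Sum>a\<in>UNIV. \<Sum>d\<in>UNIV. G d a c x * pd d (k a) x)
      = (\<Sum>a\<in>UNIV. \<Sum>d\<in>UNIV. G a d c x * pd a (k d) x)"
    by (rule sum.swap)
  have t4: "(\<Sum>a\<in>UNIV. \<Sum>d\<in>UNIV. G a a d x * pd c (k d) x)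
      = (\<Sum>d\<in>UNIV. \<Sum>e\<in>UNIV. G d e d x * pd c (k e) x)"
    using sym[OF U(2)] by simp
  have t5: "(\<Sum>d\<in>UNIV. \<Sum>e\<in>UNIV. G e c d x * pd e (k d) x)
      = (\<Sum>d\<in>UNIV. \<Sum>e\<in>UNIV. G d c e x * pd d (k e) x)"
    by (rule sum.swap)
  show ?thesis
    using t1 t2 t3 t4 t5 unfolding lie_conn_def by (simp add: sum.distrib sum_subtractf)
qed

lemma tracefree_part_eq_self:
  assumes "\<And>c. (\<Sum>d\<in>UNIV. L d d c x) = 0" "\<And>b. (\<Sum>d\<in>UNIV. L d b d x) = 0"
  shows "tracefree_part L a b c x = L a b c x"
  using assms by (simp add: tracefree_part_def)

theorem proposition5p27:
  fixes U :: "(real^'n::finite) set" and m :: nat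
    and G :: "'n christoffel"
    and J :: "'n option \<Rightarrow> 'n option \<Rightarrow> real^'n \<Rightarrow> real"
  assumes "open U"
    and "m \<ge> 1" and "CARD('n) = 2 * m + 1"
    and "torsion_free_connection U G"
    and "parallel_tractor_complex_structure U G J"
    and "projective_symmetry U G (underlying_vf J)"
    and "is_scale U G"
    and "k_adapted U G (underlying_vf J)"
  shows "affine_symmetry U G (underlying_vf J)"
proof -
  note U = \<open>open U\<close> and torsion_free = \<open>torsion_free_connection U G\<close>
  define k where "k = underlying_vf J"
  have k: "\<And>a. smooth_fn U (k a)"
    and tracefree: "\<And>x a b c. x \<in> U \<Longrightarrow> tracefree_part (lie_conn G k) a b c x = 0"
    using \<open>projective_symmetry U G (underlying_vf J)\<close> unfolding projective_symmetry_def k_def by auto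
  have G: "\<And>a b c. smooth_fn U (G a b c)"
    using torsion_free unfolding torsion_free_connection_def by blast
  have "lie_conn G k a b c x = 0" if x: "x \<in> U" for a b c x
  proof -
    have "pd b (divergence G k) x = pd b (\<lambda>y. 0) x" for b
      using U x torsion_free \<open>k_adapted U G (underlying_vf J)\<close> k_adapted_divergence_eq_0
      unfolding k_def by (intro pd_cong_open[symmetric]) auto
    then have trace_zero: "(\<Sum>d\<in>UNIV. lie_conn G k d b d x) = 0" for b
      using lie_conn_trace_eq_pd_divergence[OF U x G k]
        is_scale_christoffel_trace_closed[OF U x torsion_free \<open>is_scale U G\<close>] by simp
    have "tracefree_part (lie_conn G k) a b c x = lie_conn G k a b c x"
      using trace_zero lie_conn_traces_eq[OF U x torsion_free k]
      by (intro tracefree_part_eq_self) simp_all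
    then show ?thesis
      using tracefree[OF x] by simp
  qed
  then show ?thesis
    using k unfolding affine_symmetry_def k_def by blast
qed

end
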